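(* In the setting described in the context, let $u\in\mathbb{R}^I_{\ge0}$ with $\mathrm{tol}(u)\ne0$, let $j\in[\varepsilon^{-1}-1]$ and $t>0$. Then $$\Pr\left(u\cdot\gamma^j\ \ge\ \mathbb{E}\left[u\cdot\gamma^j\,\middle|\,\mathcal{F}_{j-1}\right]+t\cdot\mathrm{tol}(u)\right)\ \le\ \exp\left(-\frac{t^2}{2\varepsilon m}\right).$$
   Context: A CMK instance is $\mathcal{I}=(I,w,v,m,k)$ with $I$ a finite item set, $w:I\to[0,1]$, $v:I\to\mathbb{R}_{\ge0}$, $m,k\in\mathbb{N}_{>0}$. A configuration is $C\subseteq I$ with $|C|\le k$ and $\sum_{i\in C}w(i)\le1$; $\mathcal{C}$ is the set of configurations and $\mathcal{C}(i)=\{C\in\mathcal{C}:i\in C\}$. The tolerance of $u\in\mathbb{R}^I_{\ge0}$ is $\mathrm{tol}(u)=\max\{\sum_{i\in C}u_i: C\in\mathcal{C}\}$; $u\cdot y=\sum_iu_iy_i$. A solution is a tuple of $m$ configurations, with value $v$ of their union; $\mathrm{OPT}(\mathcal{I})$ is the maximum value. A fractional solution is $x\in\mathbb{R}_{\ge0}^{\mathcal{C}}$, with $\mathrm{cover}_i(x)=\sum_{C\in\mathcal{C}(i)}x_C$, $\|x\|=\sum_Cx_C$; it is feasible if $\mathrm{cover}(x)\in[0,1]^I$; for $y\in\mathbb{R}^I$, $v(y)=\sum_iy_iv(i)$, and $v(x)=v(\mathrm{cover}(x))$. For $S\subseteq I$ and $\ell\in\mathbb{N}$, $\mathrm{LP}(S,\ell)$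 is: maximize $v(x)$ over feasible fractional solutions $x$ with $x_C=0$ whenever $C\not\subseteq S$, and $\|x\|=\ell$. For $\|x\|\ne0$, a random configuration $R$ is distributed by $x$ ($R\sim x$) if $\Pr(R=C)=x_C/\|x\|$. Given $\varepsilon\in(0,0.1)$, $\mathcal{I}$ is $\varepsilon$-simple if $m>\exp(\exp(\varepsilon^{-30}))$ and $\varepsilon m\in\mathbb{N}$. Iterative randomized rounding: let $\varepsilon\in(0,0.1)$ with $\varepsilon^{-1/2}\in\mathbb{N}$ and $\mathcal{I}$ be $\varepsilon$-simple; let $q=\varepsilon m$ and $S_0=I$. For $j=1,\dots,\varepsilon^{-1}$: let $m_j=m(1-(j-1)\varepsilon)$; let $x^j$ be a $(1-\varepsilon)$-approximate solution of $\mathrm{LP}(S_{j-1},m_j)$ (a feasible solution of value at least $(1-\varepsilon)$ times its optimum), determined by the outcomes of the samples of previous iterations; sample independently $R^j_1,\dots,R^j_q\sim x^j$; set $S_j=S_{j-1}\setminus\bigcup_{b=1}^qR^j_b$. Let $\mathcal{F}_0$ be the trivial $\sigma$-algebra and $\mathcal{F}_j$ the $\sigma$-algebra generated by $\{R^{j'}_b: j'\le j,\ b\in[q]\}$. Fix an optimal solution $(C^*_1,\dots,C^*_m)$ and let $S^*=\bigcup_bC^*_b$ (so $v(S^* )=\mathrm{OPT}(\mathcal{I})$). Define $\gamma^0=\mathbb{1}_{S^*}\in\{0,1\}^I$ (indicator vector of $S^*$). For $j=1,\dots,\varepsilon^{-1}-1$ define $\lambda^j\in\mathbb{R}^I_{\ge0}$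 by $\lambda^j_i=\frac{1-j\varepsilon}{1-(j-1)\varepsilon}\cdot\frac{1}{\Pr(i\in S_j\mid\mathcal{F}_{j-1})}\cdot\gamma^{j-1}_i$ for $i\in S_{j-1}$ (this conditional probability is positive for such $i$) and $\lambda^j_i=0$ for $i\notin S_{j-1}$; and define $\gamma^j_i=\mathbb{1}_{i\in S_j}\cdot\lambda^j_i$ for all $i\in I$. *)

theory Defs
  imports "HOL-Probability.Probability"
begin

type_synonym 'a history = "'a set list list"
  \<comment> \<open>a history: the list of completed rounds; round j is the list of the q sampled
      configurations R^j_1, ..., R^j_q\<close>

definition configs :: "'a set \<Rightarrow> ('a \<Rightarrow> real) \<Rightarrow> nat \<Rightarrow> 'a set set" where
  "configs I w k = {C. C \<subseteq> I \<and> card C \<le> k \<and> (\<Sum>i\<in>C. w i) \<le> 1}"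

definition tol :: "'a set set \<Rightarrow> ('a \<Rightarrow> real) \<Rightarrow> real" where
  "tol Cs u = Max ((\<lambda>C. \<Sum>i\<in>C. u i) ` Cs)"

definition dotp :: "'a set \<Rightarrow> ('a \<Rightarrow> real) \<Rightarrow> ('a \<Rightarrow> real) \<Rightarrow> real" where
  "dotp I u y = (\<Sum>i\<in>I. u i * y i)"

definition setval :: "('a \<Rightarrow> real) \<Rightarrow> 'a set \<Rightarrow> real" where
  "setval v S = (\<Sum>i\<in>S. v i)"

definition cover :: "'a set set \<Rightarrow> ('a set \<Rightarrow> real) \<Rightarrow> 'a \<Rightarrow> real" where
  "cover Cs x i = (\<Sum>C\<in>{C\<in>Cs. i \<in> C}. x C)"

definition fnorm :: "'a set set \<Rightarrow> ('a set \<Rightarrow> real) \<Rightarrow> real" where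
  "fnorm Cs x = (\<Sum>C\<in>Cs. x C)"

definition vvec :: "'a set \<Rightarrow> ('a \<Rightarrow> real) \<Rightarrow> ('a \<Rightarrow> real) \<Rightarrow> real" where
  "vvec I v y = (\<Sum>i\<in>I. y i * v i)"

definition vfrac :: "'a set \<Rightarrow> 'a set set \<Rightarrow> ('a \<Rightarrow> real) \<Rightarrow> ('a set \<Rightarrow> real) \<Rightarrow> real" where
  "vfrac I Cs v x = vvec I v (cover Cs x)"

definition feasible_frac :: "'a set \<Rightarrow> 'a set set \<Rightarrow> ('a set \<Rightarrow> real) \<Rightarrow> bool" where
  "feasible_frac I Cs x \<longleftrightarrow> (\<forall>C. 0 \<le> x C) \<and> (\<forall>C. C \<notin> Cs \<longrightarrow> x C = 0)
      \<and> (\<forall>i\<in>I. 0 \<le> cover Cs x i \<and> cover Cs x i \<le> 1)"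

definition LP_feasible :: "'a set \<Rightarrow> 'a set set \<Rightarrow> 'a set \<Rightarrow> real \<Rightarrow> ('a set \<Rightarrow> real) \<Rightarrow> bool" where
  "LP_feasible I Cs S l x \<longleftrightarrow> feasible_frac I Cs x \<and> (\<forall>C. \<not> C \<subseteq> S \<longrightarrow> x C = 0)
      \<and> fnorm Cs x = l"

definition LP_opt :: "'a set \<Rightarrow> 'a set set \<Rightarrow> ('a \<Rightarrow> real) \<Rightarrow> 'a set \<Rightarrow> real \<Rightarrow> real" where
  "LP_opt I Cs v S l = Sup (vfrac I Cs v ` {x. LP_feasible I Cs S l x})"

definition approx_LP_sol ::
  "real \<Rightarrow> 'a set \<Rightarrow> 'a set set \<Rightarrow> ('a \<Rightarrow> real) \<Rightarrow> 'a set \<Rightarrow> real \<Rightarrow> ('a set \<Rightarrow> real) \<Rightarrow> bool" where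
  "approx_LP_sol \<epsilon> I Cs v S l x \<longleftrightarrow>
     LP_feasible I Cs S l x \<and> vfrac I Cs v x \<ge> (1 - \<epsilon>) * LP_opt I Cs v S l"

definition sample_pmf :: "'a set set \<Rightarrow> ('a set \<Rightarrow> real) \<Rightarrow> 'a set pmf" where
  "sample_pmf Cs x = embed_pmf (\<lambda>C. if C \<in> Cs then x C / fnorm Cs x else 0)"

text \<open>The iterative randomized rounding process: after j iterations, the distribution of the
  history of all samples. The strategy X maps the history of previous rounds to x^j.\<close>
primrec rr_process :: "'a set set \<Rightarrow> nat \<Rightarrow> ('a history \<Rightarrow> 'a set \<Rightarrow> real) \<Rightarrow> nat \<Rightarrow> 'a history pmf" where
  "rr_process Cs q X 0 = return_pmf []"
| "rr_process Cs q X (Suc j) =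
     bind_pmf (rr_process Cs q X j)
       (\<lambda>h. map_pmf (\<lambda>r. h @ [r]) (replicate_pmf q (sample_pmf Cs (X h))))"

definition Sset :: "'a set \<Rightarrow> 'a history \<Rightarrow> nat \<Rightarrow> 'a set" where
  "Sset I \<omega> j = I - \<Union> (set (concat (take j \<omega>)))"

text \<open>conditional probability / expectation w.r.t. the sigma-algebra generated by the
  (discrete) random variable g, evaluated at outcome omega\<close>
definition condP :: "'b pmf \<Rightarrow> ('b \<Rightarrow> 'c) \<Rightarrow> 'b set \<Rightarrow> 'b \<Rightarrow> real" where
  "condP P g A \<omega> = measure_pmf.prob (cond_pmf P {\<omega>'. g \<omega>' = g \<omega>}) A"

definition condE :: "'b pmf \<Rightarrow> ('b \<Rightarrow> 'c) \<Rightarrow> ('b \<Rightarrow> real) \<Rightarrow> 'b \<Rightarrow> real" where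
  "condE P g f \<omega> = measure_pmf.expectation (cond_pmf P {\<omega>'. g \<omega>' = g \<omega>}) f"

text \<open>gamma^j and lambda^j (F_j is generated by the first j rounds, i.e. by take j)\<close>
fun gamma :: "real \<Rightarrow> 'a set \<Rightarrow> 'a history pmf \<Rightarrow> 'a set \<Rightarrow> nat \<Rightarrow> 'a history \<Rightarrow> 'a \<Rightarrow> real"
and lambda :: "real \<Rightarrow> 'a set \<Rightarrow> 'a history pmf \<Rightarrow> 'a set \<Rightarrow> nat \<Rightarrow> 'a history \<Rightarrow> 'a \<Rightarrow> real" where
  "gamma \<epsilon> I P Sstar 0 \<omega> i = indicator Sstar i"
| "gamma \<epsilon> I P Sstar (Suc j) \<omega> i =
     (if i \<in> Sset I \<omega> (Suc j) then lambda \<epsilon> I P Sstar (Suc j) \<omega> i else 0)"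
| "lambda \<epsilon> I P Sstar 0 \<omega> i = 0"
| "lambda \<epsilon> I P Sstar (Suc j) \<omega> i =
     (if i \<in> Sset I \<omega> j then
        (1 - real (Suc j) * \<epsilon>) / (1 - real j * \<epsilon>)
        * (1 / condP P (\<lambda>\<omega>'. take j \<omega>') {\<omega>'. i \<in> Sset I \<omega>' (Suc j)} \<omega>)
        * gamma \<epsilon> I P Sstar j \<omega> i
      else 0)"

end

theory Submission
  imports Defs "HOL-Probability.Hoeffding"
begin

text \<open>Conditioned on the first \<open>j - 1\<close> rounds, the \<open>q = \<epsilon> m\<close> configurations sampled in round \<open>j\<close>
  are i.i.d., and \<open>u \<cdot> \<gamma>\<^sup>j\<close> is a function of them: \<open>\<gamma>\<^sup>j\<close> keeps the weight \<open>\<lambda>\<^sup>j\<close> of the items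
  hit by none of the samples and zeroes the rest. By Bernoulli's inequality the survival
  probability of an item is at least \<open>(1 - j \<epsilon>) / (1 - (j - 1) \<epsilon>)\<close>, so inductively every weight
  \<open>\<lambda>\<^sup>j\<close> lies in \<open>[0, 1]\<close>. Replacing one sampled configuration \<open>C\<close> therefore changes \<open>u \<cdot> \<gamma>\<^sup>j\<close>
  by at most \<open>u(C) \<le> tol(u)\<close>, and McDiarmid's bounded differences inequality, proved from
  Hoeffding's lemma, bounds the conditional tail by \<open>exp(-2 t\<^sup>2 / q)\<close>. Averaging over the
  history of the first \<open>j - 1\<close> rounds gives the claim.\<close>

lemma finite_set_pmf_replicate_pmf:
  "finite (set_pmf D) \<Longrightarrow> finite (set_pmf (replicate_pmf n D))"
  by (simp add: set_replicate_pmf lists_eq_set finite_lists_length_eq)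

lemma expectation_bind_pmf_finite:
  fixes h :: "'b \<Rightarrow> real"
  assumes "finite (set_pmf p)" "\<And>x. x \<in> set_pmf p \<Longrightarrow> finite (set_pmf (f x))"
  shows "measure_pmf.expectation (bind_pmf p f) h
       = measure_pmf.expectation p (\<lambda>a. measure_pmf.expectation (f a) h)"
  using pmf_expectation_bind[OF assms(1) assms(2) order_refl, where h=h]
        integral_measure_pmf_real[OF assms(1), where M=p and f="\<lambda>a. measure_pmf.expectation (f a) h"]
  by (simp add: mult.commute)

lemma expectation_replicate_pmf_Suc:
  fixes h :: "'c list \<Rightarrow> real"
  assumes "finite (set_pmf D)"
  shows "measure_pmf.expectation (replicate_pmf (Suc n) D) h
       = measure_pmf.expectation D (\<lambda>x. measure_pmf.expectation (replicate_pmf n D) (\<lambda>xs. h (x#xs)))"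
proof -
  have "replicate_pmf (Suc n) D = bind_pmf D (\<lambda>x. map_pmf (Cons x) (replicate_pmf n D))"
    by (simp add: map_pmf_def)
  then show ?thesis
    using assms by (simp add: expectation_bind_pmf_finite finite_set_pmf_replicate_pmf)
qed

lemma prob_replicate_pmf_all:
  assumes "finite (set_pmf D)"
  shows "measure_pmf.prob (replicate_pmf n D) {xs. set xs \<subseteq> A} = measure_pmf.prob D A ^ n"
proof (induction n)
  case 0
  then show ?case by (simp add: indicator_def)
next
  case (Suc n)
  have "measure_pmf.prob (replicate_pmf (Suc n) D) {xs. set xs \<subseteq> A}
      = measure_pmf.expectation (replicate_pmf (Suc n) D) (indicator {xs. set xs \<subseteq> A})"
    by (simp del: replicate_pmf.simps)
  also have "\<dots> = measure_pmf.expectation D (\<lambda>x. measure_pmf.expectation (replicate_pmf n D)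
                 (\<lambda>xs. indicator A x * indicator {xs. set xs \<subseteq> A} xs))"
    by (subst expectation_replicate_pmf_Suc[OF assms])
       (intro Bochner_Integration.integral_cong refl, simp split: split_indicator)
  also have "\<dots> = measure_pmf.prob D A ^ Suc n"
    using Suc.IH by simp
  finally show ?case .
qed

lemma prob_bind_pmf_le:
  assumes "\<And>x. x \<in> set_pmf M \<Longrightarrow> measure_pmf.prob (K x) E \<le> B"
  shows "measure_pmf.prob (bind_pmf M K) E \<le> B"
proof -
  obtain x where "x \<in> set_pmf M"
    using set_pmf_not_empty[of M] by blast
  then have B: "B \<ge> 0"
    using assms measure_nonneg order_trans by blast
  have "emeasure (measure_pmf (bind_pmf M K)) E \<le> (\<integral>\<^sup>+x. ennreal B \<partial>measure_pmf M)"
    unfolding emeasure_bind_pmf using assms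
    by (intro nn_integral_mono_AE) (auto simp: AE_measure_pmf_iff measure_pmf.emeasure_eq_measure intro: ennreal_leI)
  then show ?thesis
    using B by (simp add: measure_pmf.emeasure_eq_measure measure_pmf.emeasure_space_1)
qed

definition bounded_differences :: "'c set \<Rightarrow> nat \<Rightarrow> real \<Rightarrow> ('c list \<Rightarrow> real) \<Rightarrow> bool" where
  "bounded_differences A n c f \<longleftrightarrow>
     (\<forall>as bs x y. set as \<subseteq> A \<longrightarrow> set bs \<subseteq> A \<longrightarrow> x \<in> A \<longrightarrow> y \<in> A \<longrightarrow>
        length as + length bs + 1 = n \<longrightarrow> f (as @ x # bs) - f (as @ y # bs) \<le> c)"

lemma bounded_differences_Cons:
  assumes "bounded_differences A (Suc n) c f" "x \<in> A"
  shows "bounded_differences A n c (\<lambda>xs. f (x # xs))"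
  unfolding bounded_differences_def
proof (intro allI impI)
  fix as bs y z
  assume "set as \<subseteq> A" "set bs \<subseteq> A" "y \<in> A" "z \<in> A" "length as + length bs + 1 = n"
  then show "f (x # as @ y # bs) - f (x # as @ z # bs) \<le> c"
    using assms(1)[unfolded bounded_differences_def, rule_format, of "x # as" bs y z] assms(2)
    by simp
qed

lemma bounded_differences_head:
  assumes "bounded_differences A (Suc n) c f" "set xs \<subseteq> A" "length xs = n" "x \<in> A" "y \<in> A"
  shows "f (x # xs) - f (y # xs) \<le> c"
  using assms(1)[unfolded bounded_differences_def, rule_format, of "[]" xs x y] assms(2-) by simp

lemma hoeffding_lemma_pmf:
  fixes g :: "'c \<Rightarrow> real"
  assumes fin: "finite (set_pmf D)" and s: "s > 0"
    and range: "\<And>x y. x \<in> set_pmf D \<Longrightarrow> y \<in> set_pmf D \<Longrightarrow> g x \<le> g y + c"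
  shows "measure_pmf.expectation D (\<lambda>x. exp (s * (g x - measure_pmf.expectation D g)))
       \<le> exp (s^2 * c^2 / 8)"
proof -
  define y0 where "y0 = arg_min_on g (set_pmf D)"
  have y0: "y0 \<in> set_pmf D" "\<forall>x\<in>set_pmf D. g y0 \<le> g x"
    using arg_min_if_finite(1)[OF fin set_pmf_not_empty] arg_min_least[OF fin set_pmf_not_empty]
    unfolding y0_def by auto
  interpret interval_bounded_random_variable "measure_pmf D" g "g y0" "g y0 + c"
    by unfold_locales (auto simp: AE_measure_pmf_iff y0 range)
  have "ennreal (measure_pmf.expectation D (\<lambda>x. exp (s * (g x - measure_pmf.expectation D g))))
      = (\<integral>\<^sup>+x. ennreal (exp (s * (g x - measure_pmf.expectation D g))) \<partial>measure_pmf D)"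
    by (intro nn_integral_eq_integral[symmetric] integrable_measure_pmf_finite fin) auto
  also have "\<dots> \<le> ennreal (exp (s\<^sup>2 * (g y0 + c - g y0)\<^sup>2 / 8))"
    using Hoeffdings_lemma_nn_integral[OF s] by simp
  finally show ?thesis by simp
qed

text \<open>Peel off the first coordinate: its conditional mean ranges over an interval of length \<open>c\<close>,
  so Hoeffding's lemma applies to it.\<close>
lemma replicate_pmf_mgf_bound:
  fixes D :: "'c pmf" and f :: "'c list \<Rightarrow> real"
  assumes fin: "finite (set_pmf D)" and s: "s > 0" and bd: "bounded_differences (set_pmf D) n c f"
  shows "measure_pmf.expectation (replicate_pmf n D)
           (\<lambda>xs. exp (s * (f xs - measure_pmf.expectation (replicate_pmf n D) f)))
         \<le> exp (real n * s^2 * c^2 / 8)"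
  using bd
proof (induction n arbitrary: f)
  case 0
  then show ?case by simp
next
  case (Suc n)
  define R where "R = replicate_pmf n D"
  define g where "g x = measure_pmf.expectation R (\<lambda>xs. f (x # xs))" for x
  define \<mu> where "\<mu> = measure_pmf.expectation D g"
  have finR: "finite (set_pmf R)"
    using fin by (simp add: R_def finite_set_pmf_replicate_pmf)
  have mean: "measure_pmf.expectation (replicate_pmf (Suc n) D) f = \<mu>"
    unfolding \<mu>_def g_def R_def by (rule expectation_replicate_pmf_Suc[OF fin])
  have IH: "measure_pmf.expectation R (\<lambda>xs. exp (s * (f (x # xs) - g x))) \<le> exp (real n * s^2 * c^2 / 8)"
    if "x \<in> set_pmf D" for x
    unfolding g_def R_def by (rule Suc.IH[OF bounded_differences_Cons[OF Suc.prems that]])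
  have g_range: "g x \<le> g y + c" if "x \<in> set_pmf D" "y \<in> set_pmf D" for x y
  proof -
    have "g x - g y = measure_pmf.expectation R (\<lambda>xs. f (x # xs) - f (y # xs))"
      unfolding g_def
      by (subst Bochner_Integration.integral_diff) (auto intro: integrable_measure_pmf_finite finR)
    also have "\<dots> \<le> measure_pmf.expectation R (\<lambda>xs. c)"
    proof (intro integral_mono_AE integrable_measure_pmf_finite finR AE_pmfI)
      fix xs assume "xs \<in> set_pmf R"
      then have "set xs \<subseteq> set_pmf D" "length xs = n"
        by (auto simp: R_def set_replicate_pmf)
      then show "f (x # xs) - f (y # xs) \<le> c"
        using bounded_differences_head[OF Suc.prems _ _ that] by blast
    qed
    finally show ?thesis by simp
  qed
  have "measure_pmf.expectation (replicate_pmf (Suc n) D) (\<lambda>xs. exp (s * (f xs - \<mu>)))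
      = measure_pmf.expectation D (\<lambda>x. exp (s * (g x - \<mu>)) *
          measure_pmf.expectation R (\<lambda>xs. exp (s * (f (x # xs) - g x))))"
  proof -
    have "exp (s * (f (x # xs) - \<mu>)) = exp (s * (g x - \<mu>)) * exp (s * (f (x # xs) - g x))" for x xs
      by (simp add: mult_exp_exp algebra_simps)
    then show ?thesis
      by (simp add: expectation_replicate_pmf_Suc fin R_def del: replicate_pmf.simps)
  qed
  also have "\<dots> \<le> measure_pmf.expectation D (\<lambda>x. exp (s * (g x - \<mu>)) * exp (real n * s^2 * c^2 / 8))"
    by (intro integral_mono_AE integrable_measure_pmf_finite fin)
       (auto simp: AE_measure_pmf_iff intro!: mult_left_mono IH)
  also have "\<dots> = measure_pmf.expectation D (\<lambda>x. exp (s * (g x - \<mu>))) * exp (real n * s^2 * c^2 / 8)"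
    by simp
  also have "\<dots> \<le> exp (s^2 * c^2 / 8) * exp (real n * s^2 * c^2 / 8)"
    using hoeffding_lemma_pmf[OF fin s g_range] unfolding \<mu>_def by (intro mult_right_mono) auto
  also have "\<dots> = exp (real (Suc n) * s^2 * c^2 / 8)"
    by (simp add: mult_exp_exp algebra_simps add_divide_distrib)
  finally show ?case using mean by simp
qed

lemma mcdiarmid_replicate_pmf:
  fixes D :: "'c pmf" and f :: "'c list \<Rightarrow> real"
  assumes fin: "finite (set_pmf D)" and c: "c > 0" and T: "T > 0" and n: "n > 0"
    and bd: "bounded_differences (set_pmf D) n c f"
  shows "measure_pmf.prob (replicate_pmf n D)
           {xs. f xs \<ge> measure_pmf.expectation (replicate_pmf n D) f + T}
         \<le> exp (- 2 * T^2 / (real n * c^2))"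
proof -
  define R where "R = replicate_pmf n D"
  define \<mu> where "\<mu> = measure_pmf.expectation R f"
  define s where "s = 4 * T / (real n * c^2)"
  have s: "s > 0" using c T n by (simp add: s_def)
  have finR: "finite (set_pmf R)" using fin by (simp add: R_def finite_set_pmf_replicate_pmf)
  have markov: "indicator {xs. f xs \<ge> \<mu> + T} xs \<le> exp (- s * T) * exp (s * (f xs - \<mu>))" for xs
  proof (cases "f xs \<ge> \<mu> + T")
    case True
    then have "s * T \<le> s * (f xs - \<mu>)"
      using s by (intro mult_left_mono) auto
    then show ?thesis using True by (simp add: mult_exp_exp)
  qed simp
  have "measure_pmf.prob R {xs. f xs \<ge> \<mu> + T}
      = measure_pmf.expectation R (indicator {xs. f xs \<ge> \<mu> + T})" by simp
  also have "\<dots> \<le> measure_pmf.expectation R (\<lambda>xs. exp (- s * T) * exp (s * (f xs - \<mu>)))"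
    using markov by (intro integral_mono_AE integrable_measure_pmf_finite finR AE_I2)
  also have "\<dots> = exp (- s * T) * measure_pmf.expectation R (\<lambda>xs. exp (s * (f xs - \<mu>)))"
    by simp
  also have "\<dots> \<le> exp (- s * T) * exp (real n * s^2 * c^2 / 8)"
    using replicate_pmf_mgf_bound[OF fin s bd] unfolding R_def \<mu>_def
    by (intro mult_left_mono) auto
  also have "\<dots> = exp (- 2 * T^2 / (real n * c^2))"
    unfolding mult_exp_exp s_def using c n
    by (simp add: field_simps power2_eq_square)
  finally show ?thesis unfolding R_def \<mu>_def .
qed

definition sample_weights :: "'a set set \<Rightarrow> ('a set \<Rightarrow> real) \<Rightarrow> bool" where
  "sample_weights Cs x \<longleftrightarrow> finite Cs \<and> (\<forall>C\<in>Cs. 0 \<le> x C) \<and> fnorm Cs x > 0"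

lemma pmf_sample_pmf:
  assumes "sample_weights Cs x"
  shows "pmf (sample_pmf Cs x) C = (if C \<in> Cs then x C / fnorm Cs x else 0)"
proof -
  have fin: "finite Cs" and nn: "\<forall>C\<in>Cs. 0 \<le> x C" and pos: "fnorm Cs x > 0"
    using assms by (auto simp: sample_weights_def)
  have "(\<integral>\<^sup>+C. ennreal (if C \<in> Cs then x C / fnorm Cs x else 0) \<partial>count_space UNIV)
      = (\<Sum>C\<in>Cs. ennreal (if C \<in> Cs then x C / fnorm Cs x else 0))"
    by (rule nn_integral_count_space') (auto simp: fin)
  also have "\<dots> = ennreal (\<Sum>C\<in>Cs. x C / fnorm Cs x)"
    using nn pos by (subst sum_ennreal) auto
  also have "(\<Sum>C\<in>Cs. x C / fnorm Cs x) = 1"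
    using pos by (simp add: fnorm_def flip: sum_divide_distrib)
  finally show ?thesis
    unfolding sample_pmf_def by (subst pmf_embed_pmf) (use nn pos in auto)
qed

lemma set_sample_pmf_subset: "sample_weights Cs x \<Longrightarrow> set_pmf (sample_pmf Cs x) \<subseteq> Cs"
  by (auto simp: set_pmf_iff pmf_sample_pmf split: if_splits)

lemma finite_set_sample_pmf: "sample_weights Cs x \<Longrightarrow> finite (set_pmf (sample_pmf Cs x))"
  using set_sample_pmf_subset by (metis finite_subset sample_weights_def)

lemma prob_sample_pmf_contains:
  assumes "sample_weights Cs x"
  shows "measure_pmf.prob (sample_pmf Cs x) {C. i \<in> C} = cover Cs x i / fnorm Cs x"
proof -
  have "measure_pmf.prob (sample_pmf Cs x) {C. i \<in> C}
      = measure_pmf.prob (sample_pmf Cs x) {C\<in>Cs. i \<in> C}"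
    using set_sample_pmf_subset[OF assms]
    by (intro measure_eq_AE) (auto simp: AE_measure_pmf_iff)
  also have "\<dots> = (\<Sum>C\<in>{C\<in>Cs. i \<in> C}. pmf (sample_pmf Cs x) C)"
    using assms by (intro measure_measure_pmf_finite) (auto simp: sample_weights_def)
  also have "\<dots> = (\<Sum>C\<in>{C\<in>Cs. i \<in> C}. x C / fnorm Cs x)"
    using assms by (intro sum.cong) (auto simp: pmf_sample_pmf)
  finally show ?thesis by (simp add: cover_def sum_divide_distrib)
qed

lemma length_rr_process: "\<omega> \<in> set_pmf (rr_process Cs q X n) \<Longrightarrow> length \<omega> = n"
  by (induction n arbitrary: \<omega>) (auto simp: set_replicate_pmf)

lemma map_pmf_take_rr_process:
  "n \<le> N \<Longrightarrow> map_pmf (take n) (rr_process Cs q X N) = rr_process Cs q X n"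
proof (induction N)
  case 0
  then show ?case by simp
next
  case (Suc N)
  show ?case
  proof (cases "n = Suc N")
    case True
    then show ?thesis
      by (subst map_pmf_cong[where g=id]) (auto dest: length_rr_process simp: pmf.map_id)
  next
    case False
    then have n: "n \<le> N" using Suc by simp
    have "map_pmf (take n) (rr_process Cs q X (Suc N))
        = bind_pmf (rr_process Cs q X N) (\<lambda>h. return_pmf (take n h))"
      unfolding rr_process.simps map_bind_pmf pmf.map_comp o_def
    proof (intro bind_pmf_cong refl)
      fix h assume "h \<in> set_pmf (rr_process Cs q X N)"
      then have "length h = N" by (rule length_rr_process)
      then show "map_pmf (\<lambda>r. take n (h @ [r])) (replicate_pmf q (sample_pmf Cs (X h)))
          = return_pmf (take n h)"
        using n by simp
    qed
    also have "\<dots> = map_pmf (take n) (rr_process Cs q X N)"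
      by (simp add: map_pmf_def)
    finally show ?thesis using Suc n by simp
  qed
qed

lemma take_in_set_rr_process:
  "n \<le> N \<Longrightarrow> \<omega> \<in> set_pmf (rr_process Cs q X N) \<Longrightarrow> take n \<omega> \<in> set_pmf (rr_process Cs q X n)"
  by (metis map_pmf_take_rr_process pmf.set_map imageI)

lemma ex_extension_rr_process:
  "n \<le> N \<Longrightarrow> h \<in> set_pmf (rr_process Cs q X n) \<Longrightarrow> \<exists>\<omega>\<in>set_pmf (rr_process Cs q X N). take n \<omega> = h"
  by (metis map_pmf_take_rr_process pmf.set_map imageE)

lemma prob_rr_process_take_invariant:
  assumes "n \<le> N" "take n -` E = E"
  shows "measure_pmf.prob (rr_process Cs q X N) E = measure_pmf.prob (rr_process Cs q X n) E"
proof -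
  have "measure_pmf.prob (rr_process Cs q X N) E
      = measure_pmf.prob (rr_process Cs q X N) (take n -` E)"
    using assms(2) by simp
  also have "\<dots> = measure_pmf.prob (map_pmf (take n) (rr_process Cs q X N)) E"
    by simp
  also have "\<dots> = measure_pmf.prob (rr_process Cs q X n) E"
    by (simp only: map_pmf_take_rr_process[OF assms(1)])
  finally show ?thesis .
qed

locale rounding_process =
  fixes Cs :: "'a set set" and q :: nat and X :: "'a history \<Rightarrow> 'a set \<Rightarrow> real" and N :: nat
  assumes sample_weights_X:
    "\<And>n h. n < N \<Longrightarrow> h \<in> set_pmf (rr_process Cs q X n) \<Longrightarrow> sample_weights Cs (X h)"
begin

lemma finite_set_rr_process: "n \<le> N \<Longrightarrow> finite (set_pmf (rr_process Cs q X n))"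
proof (induction n)
  case 0
  then show ?case by simp
next
  case (Suc n)
  have "finite (set_pmf (replicate_pmf q (sample_pmf Cs (X h))))"
    if "h \<in> set_pmf (rr_process Cs q X n)" for h
    using sample_weights_X that Suc.prems
    by (intro finite_set_pmf_replicate_pmf finite_set_sample_pmf) (auto simp: Suc_le_eq)
  then show ?case
    using Suc by (auto intro!: finite_UN_I finite_imageI)
qed

lemma cond_rr_process_Suc:
  assumes j0: "j0 < N" and h: "h \<in> set_pmf (rr_process Cs q X j0)"
  shows "cond_pmf (rr_process Cs q X (Suc j0)) {\<omega>. take j0 \<omega> = h}
       = map_pmf (\<lambda>r. h @ [r]) (replicate_pmf q (sample_pmf Cs (X h)))"
proof -
  define M where "M = rr_process Cs q X j0"
  define K where "K h' = map_pmf (\<lambda>r. h' @ [r]) (replicate_pmf q (sample_pmf Cs (X h')))" for h'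
  define A where "A = {\<omega>. take j0 \<omega> = h}"
  have rr: "rr_process Cs q X (Suc j0) = bind_pmf M K"
    by (simp add: M_def K_def[abs_def])
  have finM: "finite (set_pmf M)"
    using finite_set_rr_process j0 by (simp add: M_def)
  have lenM: "length h' = j0" if "h' \<in> set_pmf M" for h'
    using that length_rr_process by (auto simp: M_def)
  have finK: "finite (set_pmf (K h'))" if "h' \<in> set_pmf M" for h'
    using that sample_weights_X j0
    by (auto simp: K_def M_def intro!: finite_set_pmf_replicate_pmf finite_set_sample_pmf)
  have hM: "h \<in> set_pmf M" using h by (simp add: M_def)
  have suppK: "set_pmf (K h') \<subseteq> {\<omega>. take j0 \<omega> = h'}" if "h' \<in> set_pmf M" for h'
    using lenM[OF that] by (auto simp: K_def)
  have ne: "set_pmf (bind_pmf M K) \<inter> A \<noteq> {}"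
  proof -
    obtain \<omega> where "\<omega> \<in> set_pmf (K h)" using set_pmf_not_empty[of "K h"] by blast
    then show ?thesis using hM suppK[OF hM] by (auto simp: A_def)
  qed
  have prob_A: "measure_pmf.prob (bind_pmf M K) A = pmf M h"
  proof -
    have "measure_pmf.prob (bind_pmf M K) A = measure_pmf.expectation (bind_pmf M K) (indicator A)"
      by simp
    also have "\<dots> = measure_pmf.expectation M (\<lambda>h'. measure_pmf.expectation (K h') (indicator A))"
      using finM finK by (rule expectation_bind_pmf_finite)
    also have "\<dots> = measure_pmf.expectation M (\<lambda>h'. if h' = h then 1 else 0)"
      using lenM by (intro integral_cong_AE) (auto simp: AE_measure_pmf_iff K_def A_def)
    also have "\<dots> = pmf M h"
      by (subst integral_measure_pmf_real[where A="{h}"]) (auto split: if_splits)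
    finally show ?thesis .
  qed
  have pmf_A: "pmf (bind_pmf M K) \<omega> = pmf (K h) \<omega> * pmf M h" if "\<omega> \<in> A" for \<omega>
  proof -
    have "pmf (bind_pmf M K) \<omega> = (\<integral>h'. pmf (K h') \<omega> \<partial>measure_pmf M)"
      by (rule pmf_bind)
    also have "\<dots> = (\<Sum>h'\<in>{h}. pmf (K h') \<omega> * pmf M h')"
    proof (rule integral_measure_pmf_real)
      fix h' assume h': "h' \<in> set_pmf M" "pmf (K h') \<omega> \<noteq> 0"
      then have "\<omega> \<in> set_pmf (K h')" by (simp add: set_pmf_iff)
      then show "h' \<in> {h}" using suppK[OF h'(1)] that by (auto simp: A_def)
    qed auto
    finally show ?thesis by simp
  qed
  have pos: "pmf M h > 0" using hM by (simp add: pmf_positive)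
  have "cond_pmf (bind_pmf M K) A = K h"
  proof (rule pmf_eqI)
    fix \<omega>
    show "pmf (cond_pmf (bind_pmf M K) A) \<omega> = pmf (K h) \<omega>"
    proof (cases "\<omega> \<in> A")
      case True
      then show ?thesis
        using pmf_cond[OF ne, of \<omega>] prob_A pmf_A[OF True] pos by simp
    next
      case False
      then have "pmf (K h) \<omega> = 0" using suppK[OF hM] by (auto simp: A_def set_pmf_iff)
      then show ?thesis
        using pmf_cond[OF ne, of \<omega>] False by simp
    qed
  qed
  then show ?thesis
    unfolding rr A_def K_def .
qed

lemma expectation_cond_rr_process:
  fixes F :: "'a history \<Rightarrow> real"
  assumes j0: "j0 < N" and h: "h \<in> set_pmf (rr_process Cs q X j0)"
    and F: "\<And>\<omega>. F \<omega> = F (take (Suc j0) \<omega>)"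
  shows "measure_pmf.expectation (cond_pmf (rr_process Cs q X N) {\<omega>. take j0 \<omega> = h}) F
       = measure_pmf.expectation (replicate_pmf q (sample_pmf Cs (X h))) (\<lambda>r. F (h @ [r]))"
proof -
  define A where "A = {\<omega>::'a history. take j0 \<omega> = h}"
  have A: "take (Suc j0) -` A = A" by (auto simp: A_def min_def)
  have ne: "set_pmf (rr_process Cs q X N) \<inter> take (Suc j0) -` A \<noteq> {}"
    using ex_extension_rr_process[where n=j0 and N=N and h=h] j0 h unfolding A by (auto simp: A_def)
  have "map_pmf (take (Suc j0)) (cond_pmf (rr_process Cs q X N) A)
      = cond_pmf (rr_process Cs q X (Suc j0)) A"
    using cond_map_pmf[OF ne] j0 by (simp add: map_pmf_take_rr_process A)
  also have "\<dots> = map_pmf (\<lambda>r. h @ [r]) (replicate_pmf q (sample_pmf Cs (X h)))"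
    unfolding A_def using j0 h by (rule cond_rr_process_Suc)
  finally have marginal: "map_pmf (take (Suc j0)) (cond_pmf (rr_process Cs q X N) A)
      = map_pmf (\<lambda>r. h @ [r]) (replicate_pmf q (sample_pmf Cs (X h)))" .
  have "measure_pmf.expectation (cond_pmf (rr_process Cs q X N) A) F
      = measure_pmf.expectation (cond_pmf (rr_process Cs q X N) A) (\<lambda>\<omega>. F (take (Suc j0) \<omega>))"
    by (intro Bochner_Integration.integral_cong refl F)
  also have "\<dots> = measure_pmf.expectation (map_pmf (take (Suc j0)) (cond_pmf (rr_process Cs q X N) A)) F"
    by simp
  also have "\<dots> = measure_pmf.expectation (replicate_pmf q (sample_pmf Cs (X h))) (\<lambda>r. F (h @ [r]))"
    unfolding marginal by simp
  finally show ?thesis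
    unfolding A_def .
qed

end

lemma Sset_append: "length h = n \<Longrightarrow> Sset I (h @ [r]) (Suc n) = Sset I h n - \<Union> (set r)"
  by (auto simp: Sset_def)

lemma Sset_take: "n' \<le> n \<Longrightarrow> Sset I (take n \<omega>) n' = Sset I \<omega> n'"
  by (auto simp: Sset_def min_def)

lemma Sset_Suc_subset: "Sset I \<omega> (Suc n) \<subseteq> Sset I \<omega> n"
  using set_take_subset_set_take[of n "Suc n" \<omega>] by (auto simp: Sset_def)

lemma gamma_cong_take:
  "take n \<omega> = take n \<omega>' \<Longrightarrow> gamma \<epsilon> I P S n \<omega> i = gamma \<epsilon> I P S n \<omega>' i"
proof (induction n arbitrary: i)
  case 0
  then show ?case by simp
next
  case (Suc n)
  have take_n: "take n \<omega> = take n \<omega>'"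
    using arg_cong[OF Suc.prems, of "take n"] by (simp add: min_def)
  then have "Sset I \<omega> (Suc n) = Sset I \<omega>' (Suc n)" "Sset I \<omega> n = Sset I \<omega>' n"
    "condP P (\<lambda>\<omega>'. take n \<omega>') A \<omega> = condP P (\<lambda>\<omega>'. take n \<omega>') A \<omega>'" for A
    using Suc.prems by (simp_all add: Sset_def condP_def)
  then show ?case
    using Suc.IH[OF take_n] by simp
qed

lemma lambda_Suc_cong_take:
  assumes "take n \<omega> = take n \<omega>'"
  shows "lambda \<epsilon> I P S (Suc n) \<omega> i = lambda \<epsilon> I P S (Suc n) \<omega>' i"
proof -
  have "Sset I \<omega> n = Sset I \<omega>' n"
    "condP P (\<lambda>\<omega>'. take n \<omega>') A \<omega> = condP P (\<lambda>\<omega>'. take n \<omega>') A \<omega>'" for A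
    using assms by (simp_all add: Sset_def condP_def)
  then show ?thesis
    using gamma_cong_take[OF assms, of \<epsilon> I P S i] by (simp only: lambda.simps)
qed

lemma gamma_Suc_append:
  assumes "length h = n"
  shows "gamma \<epsilon> I P S (Suc n) (h @ [r]) i
       = (if i \<in> Sset I h n - \<Union> (set r) then lambda \<epsilon> I P S (Suc n) h i else 0)"
proof -
  have "lambda \<epsilon> I P S (Suc n) (h @ [r]) i = lambda \<epsilon> I P S (Suc n) h i"
    by (rule lambda_Suc_cong_take) (simp add: assms)
  then show ?thesis
    by (simp add: Sset_append[OF assms])
qed

lemma surviving_weight_diff_le:
  fixes u L :: "'a \<Rightarrow> real"
  assumes "finite I" "\<forall>i\<in>I. 0 \<le> u i" "\<forall>i\<in>T. 0 \<le> L i \<and> L i \<le> 1" "y \<subseteq> I"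
  shows "(\<Sum>i\<in>I. u i * (if i \<in> T - (U \<union> x) then L i else 0))
       - (\<Sum>i\<in>I. u i * (if i \<in> T - (U \<union> y) then L i else 0)) \<le> (\<Sum>i\<in>y. u i)"
proof -
  have "u i * (if i \<in> T - (U \<union> x) then L i else 0) - u i * (if i \<in> T - (U \<union> y) then L i else 0)
      \<le> (if i \<in> y then u i else 0)" if "i \<in> I" for i
  proof (cases "i \<in> y")
    case True
    then show ?thesis
      using assms(2,3) that by (auto simp: mult_left_le)
  next
    case False
    then show ?thesis
      using assms(2,3) that by auto
  qed
  then have "(\<Sum>i\<in>I. u i * (if i \<in> T - (U \<union> x) then L i else 0))
       - (\<Sum>i\<in>I. u i * (if i \<in> T - (U \<union> y) then L i else 0)) \<le> (\<Sum>i\<in>I. if i \<in> y then u i else 0)"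
    by (simp add: sum_mono flip: sum_subtractf)
  also have "\<dots> = (\<Sum>i\<in>y. u i)"
    using assms(1,4) by (simp add: sum.inter_restrict[symmetric] Int_absorb1 flip: sum.inter_filter)
  finally show ?thesis .
qed

lemma bounded_differences_surviving_weight:
  fixes u L :: "'a \<Rightarrow> real" and A :: "'a set set"
  assumes "finite I" "\<forall>i\<in>I. 0 \<le> u i" "\<forall>i\<in>T. 0 \<le> L i \<and> L i \<le> 1"
    and "\<forall>C\<in>A. C \<subseteq> I \<and> (\<Sum>i\<in>C. u i) \<le> c"
  shows "bounded_differences A n c (\<lambda>r. \<Sum>i\<in>I. u i * (if i \<in> T - \<Union> (set r) then L i else 0))"
  unfolding bounded_differences_def
proof (intro allI impI)
  fix as bs :: "'a set list" and x y :: "'a set"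
  assume "y \<in> A"
  have U: "\<Union> (set (as @ z # bs)) = (\<Union> (set as) \<union> \<Union> (set bs)) \<union> z" for z
    by auto
  have "(\<Sum>i\<in>I. u i * (if i \<in> T - \<Union> (set (as @ x # bs)) then L i else 0))
           - (\<Sum>i\<in>I. u i * (if i \<in> T - \<Union> (set (as @ y # bs)) then L i else 0)) \<le> (\<Sum>i\<in>y. u i)"
    unfolding U using assms(4) \<open>y \<in> A\<close> by (intro surviving_weight_diff_le[OF assms(1-3)]) auto
  also have "\<dots> \<le> c"
    using assms(4) \<open>y \<in> A\<close> by simp
  finally show "(\<Sum>i\<in>I. u i * (if i \<in> T - \<Union> (set (as @ x # bs)) then L i else 0))
           - (\<Sum>i\<in>I. u i * (if i \<in> T - \<Union> (set (as @ y # bs)) then L i else 0)) \<le> c" .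
qed

locale iterative_rounding =
  fixes I :: "'a set" and Cs :: "'a set set" and q :: nat and X :: "'a history \<Rightarrow> 'a set \<Rightarrow> real"
    and N m :: nat and \<epsilon> :: real
  assumes finite_I: "finite I" and Cs_Pow: "Cs \<subseteq> Pow I"
    and X_feasible: "\<And>n h. n < N \<Longrightarrow> h \<in> set_pmf (rr_process Cs q X n) \<Longrightarrow> feasible_frac I Cs (X h)"
    and fnorm_X: "\<And>n h. n < N \<Longrightarrow> h \<in> set_pmf (rr_process Cs q X n) \<Longrightarrow>
        fnorm Cs (X h) = real m * (1 - real n * \<epsilon>)"
    and q_eq: "real q = \<epsilon> * real m" and eps_pos: "0 < \<epsilon>" and m_pos: "0 < m"
    and N_eps: "real N * \<epsilon> \<le> 1"
begin

abbreviation P :: "'a history pmf" where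
  "P \<equiv> rr_process Cs q X N"

lemma q_pos: "0 < q"
proof -
  have "0 < real q"
    using q_eq eps_pos m_pos by simp
  then show ?thesis by simp
qed

lemma rounding_scale_pos:
  assumes "n < N"
  shows "0 < 1 - real n * \<epsilon>"
proof -
  have "real n * \<epsilon> < real N * \<epsilon>"
    using assms eps_pos by (simp add: mult_strict_right_mono)
  then show ?thesis
    using N_eps by simp
qed

sublocale rounding_process Cs q X N
proof
  fix n h assume "n < N" "h \<in> set_pmf (rr_process Cs q X n)"
  then show "sample_weights Cs (X h)"
    using X_feasible[of n h] fnorm_X[of n h] rounding_scale_pos[of n] m_pos Cs_Pow finite_I
    by (auto simp: sample_weights_def feasible_frac_def intro: finite_subset)
qed

lemma survival_prob:
  assumes n: "n < N" and h: "h \<in> set_pmf (rr_process Cs q X n)" and i: "i \<in> Sset I h n"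
  shows "condP P (\<lambda>\<omega>. take n \<omega>) {\<omega>. i \<in> Sset I \<omega> (Suc n)} h
       = (1 - cover Cs (X h) i / fnorm Cs (X h)) ^ q"
proof -
  have len: "length h = n"
    using h length_rr_process by blast
  have sw: "sample_weights Cs (X h)"
    using n h by (rule sample_weights_X)
  define D where "D = sample_pmf Cs (X h)"
  define SS where "SS = {\<omega>::'a history. i \<in> Sset I \<omega> (Suc n)}"
  have "condP P (\<lambda>\<omega>. take n \<omega>) SS h
      = measure_pmf.expectation (cond_pmf P {\<omega>. take n \<omega> = h}) (indicator SS)"
    by (simp add: condP_def len)
  also have "\<dots> = measure_pmf.expectation (replicate_pmf q D) (\<lambda>r. indicator SS (h @ [r]))"
    unfolding D_def using n h by (rule expectation_cond_rr_process) (simp add: SS_def indicator_def Sset_take)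
  also have "(\<lambda>r. indicator SS (h @ [r]) :: real) = indicator {r. set r \<subseteq> {C. i \<notin> C}}"
    using i by (auto simp: SS_def Sset_append[OF len] fun_eq_iff split: split_indicator)
  also have "measure_pmf.expectation (replicate_pmf q D) (indicator {r. set r \<subseteq> {C. i \<notin> C}})
      = measure_pmf.prob D {C. i \<notin> C} ^ q"
    using prob_replicate_pmf_all[OF finite_set_sample_pmf[OF sw]] by (simp add: D_def)
  also have "measure_pmf.prob D {C. i \<notin> C} = 1 - measure_pmf.prob D {C. i \<in> C}"
    using measure_pmf.prob_compl[of "{C. i \<in> C}" D] by (simp add: Compl_eq Diff_eq)
  also have "measure_pmf.prob D {C. i \<in> C} = cover Cs (X h) i / fnorm Cs (X h)"
    unfolding D_def by (rule prob_sample_pmf_contains[OF sw])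
  finally show ?thesis
    unfolding SS_def .
qed

lemma survival_prob_ge:
  assumes n: "n < N" and h: "h \<in> set_pmf (rr_process Cs q X n)" and i: "i \<in> Sset I h n"
  shows "(1 - real (Suc n) * \<epsilon>) / (1 - real n * \<epsilon>)
       \<le> condP P (\<lambda>\<omega>. take n \<omega>) {\<omega>. i \<in> Sset I \<omega> (Suc n)} h"
proof -
  define a where "a = 1 - real n * \<epsilon>"
  define p where "p = cover Cs (X h) i / fnorm Cs (X h)"
  have a: "a > 0"
    using rounding_scale_pos[OF n] by (simp add: a_def)
  have fnorm: "fnorm Cs (X h) = real m * a"
    using fnorm_X[OF n h] by (simp add: a_def)
  have cover: "0 \<le> cover Cs (X h) i" "cover Cs (X h) i \<le> 1"
    using X_feasible[OF n h] i by (auto simp: feasible_frac_def Sset_def)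
  have "p = measure_pmf.prob (sample_pmf Cs (X h)) {C. i \<in> C}"
    using prob_sample_pmf_contains[OF sample_weights_X[OF n h], of i] by (simp add: p_def)
  then have p_le: "p \<le> 1"
    by simp
  have "real q * p = \<epsilon> * cover Cs (X h) i / a"
    unfolding p_def fnorm q_eq using m_pos a by (simp add: field_simps)
  also have "\<dots> \<le> \<epsilon> / a"
    using cover a eps_pos by (simp add: divide_right_mono mult_left_le)
  finally have qp: "real q * p \<le> \<epsilon> / a" .
  have "(1 - real (Suc n) * \<epsilon>) / (1 - real n * \<epsilon>) = 1 - \<epsilon> / a"
    using a by (simp add: a_def field_simps)
  also have "\<dots> \<le> 1 + real q * (- p)"
    using qp by simp
  also have "\<dots> \<le> (1 + - p) ^ q"
    using p_le by (intro Bernoulli_inequality) simp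
  finally show ?thesis
    using survival_prob[OF n h i] by (simp add: p_def)
qed

lemma lambda_unit_interval:
  assumes n: "n < N" and h: "h \<in> set_pmf (rr_process Cs q X n)" and i: "i \<in> Sset I h n"
    and gamma: "0 \<le> gamma \<epsilon> I P S n h i" "gamma \<epsilon> I P S n h i \<le> 1"
  shows "0 \<le> lambda \<epsilon> I P S (Suc n) h i \<and> lambda \<epsilon> I P S (Suc n) h i \<le> 1"
proof -
  define \<rho> where "\<rho> = (1 - real (Suc n) * \<epsilon>) / (1 - real n * \<epsilon>)"
  define cp where "cp = condP P (\<lambda>\<omega>. take n \<omega>) {\<omega>. i \<in> Sset I \<omega> (Suc n)} h"
  have "real (Suc n) * \<epsilon> \<le> real N * \<epsilon>"
    using n eps_pos by (intro mult_right_mono) auto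
  then have "real (Suc n) * \<epsilon> \<le> 1"
    using N_eps by simp
  then have "0 \<le> \<rho>"
    using rounding_scale_pos[OF n] by (simp add: \<rho>_def)
  moreover have "\<rho> \<le> cp"
    unfolding \<rho>_def cp_def by (rule survival_prob_ge[OF n h i])
  \<comment> \<open>if \<open>cp = 0\<close> then also \<open>\<rho> = 0\<close>, and \<open>\<rho> / 0 = 0\<close> keeps the ratio in \<open>[0, 1]\<close>\<close>
  ultimately have ratio: "0 \<le> \<rho> / cp" "\<rho> / cp \<le> 1"
    by (auto simp: divide_le_eq_1)
  have "lambda \<epsilon> I P S (Suc n) h i = \<rho> / cp * gamma \<epsilon> I P S n h i"
    using i by (simp add: \<rho>_def cp_def)
  then show ?thesis
    using mult_nonneg_nonneg[OF ratio(1) gamma(1)] mult_le_one[OF ratio(2) gamma] by simp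
qed

lemma gamma_unit_interval:
  "n \<le> N \<Longrightarrow> h \<in> set_pmf (rr_process Cs q X n) \<Longrightarrow>
     0 \<le> gamma \<epsilon> I P S n h i \<and> gamma \<epsilon> I P S n h i \<le> 1"
proof (induction n arbitrary: h i)
  case 0
  then show ?case by (simp add: indicator_def)
next
  case (Suc n)
  define h0 where "h0 = take n h"
  have n: "n < N"
    using Suc.prems by simp
  have h0: "h0 \<in> set_pmf (rr_process Cs q X n)"
    unfolding h0_def using Suc.prems(2) by (rule take_in_set_rr_process[rotated]) simp
  have lambda_h0: "lambda \<epsilon> I P S (Suc n) h i = lambda \<epsilon> I P S (Suc n) h0 i"
    by (rule lambda_Suc_cong_take) (simp add: h0_def)
  show ?case
  proof (cases "i \<in> Sset I h (Suc n)")
    case True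
    then have "i \<in> Sset I h0 n"
      using Sset_Suc_subset[of I h n] by (auto simp: h0_def Sset_take)
    then show ?thesis
      using True lambda_h0 lambda_unit_interval[OF n h0] Suc.IH[OF _ h0] n by simp
  qed simp
qed

lemma gamma_dotp_round_tail:
  fixes u :: "'a \<Rightarrow> real"
  assumes u: "\<forall>i\<in>I. 0 \<le> u i" and c: "\<forall>C\<in>Cs. (\<Sum>i\<in>C. u i) \<le> c" "0 < c" and T: "0 < T"
    and j0: "Suc j0 < N" and h: "h \<in> set_pmf (rr_process Cs q X j0)"
  shows "measure_pmf.prob (replicate_pmf q (sample_pmf Cs (X h)))
           {r. dotp I u (gamma \<epsilon> I P S (Suc j0) (h @ [r]))
               \<ge> condE P (\<lambda>\<omega>. take j0 \<omega>) (\<lambda>\<omega>. dotp I u (gamma \<epsilon> I P S (Suc j0) \<omega>)) (h @ [r]) + T}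
         \<le> exp (- 2 * T^2 / (real q * c^2))"
proof -
  define D where "D = sample_pmf Cs (X h)"
  define Y where "Y \<omega> = dotp I u (gamma \<epsilon> I P S (Suc j0) \<omega>)" for \<omega>
  define L where "L i = lambda \<epsilon> I P S (Suc j0) h i" for i
  have len: "length h = j0"
    using h length_rr_process by blast
  have sw: "sample_weights Cs (X h)"
    using j0 h by (intro sample_weights_X) auto
  have Y_take: "Y \<omega> = Y (take (Suc j0) \<omega>)" for \<omega>
    unfolding Y_def dotp_def using gamma_cong_take[of "Suc j0" \<omega> "take (Suc j0) \<omega>"] by simp
  have cond_mean: "condE P (\<lambda>\<omega>. take j0 \<omega>) Y (h @ [r])
      = measure_pmf.expectation (replicate_pmf q D) (\<lambda>r. Y (h @ [r]))" for r
  proof -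
    have "condE P (\<lambda>\<omega>. take j0 \<omega>) Y (h @ [r])
        = measure_pmf.expectation (cond_pmf P {\<omega>. take j0 \<omega> = h}) Y"
      by (simp add: condE_def len)
    also have "\<dots> = measure_pmf.expectation (replicate_pmf q D) (\<lambda>r. Y (h @ [r]))"
      unfolding D_def using j0 by (intro expectation_cond_rr_process[where F=Y, OF _ h Y_take]) simp
    finally show ?thesis .
  qed
  have Y_append: "Y (h @ [r]) = (\<Sum>i\<in>I. u i * (if i \<in> Sset I h j0 - \<Union> (set r) then L i else 0))" for r
    by (simp only: Y_def dotp_def L_def gamma_Suc_append[OF len])
  have L: "\<forall>i\<in>Sset I h j0. 0 \<le> L i \<and> L i \<le> 1"
    using lambda_unit_interval[OF _ h] gamma_unit_interval[OF _ h] j0 unfolding L_def by auto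
  have bd: "bounded_differences (set_pmf D) q c (\<lambda>r. Y (h @ [r]))"
    unfolding Y_append using set_sample_pmf_subset[OF sw] Cs_Pow c(1)
    by (intro bounded_differences_surviving_weight[OF finite_I u L]) (auto simp: D_def)
  have "measure_pmf.prob (replicate_pmf q D) {r. Y (h @ [r]) \<ge> condE P (\<lambda>\<omega>. take j0 \<omega>) Y (h @ [r]) + T}
      \<le> exp (- 2 * T^2 / (real q * c^2))"
    unfolding cond_mean using finite_set_sample_pmf[OF sw] c(2) T q_pos bd
    unfolding D_def by (rule mcdiarmid_replicate_pmf)
  then show ?thesis
    unfolding Y_def[abs_def] D_def .
qed

lemma gamma_dotp_tail:
  fixes u :: "'a \<Rightarrow> real"
  assumes u: "\<forall>i\<in>I. 0 \<le> u i" and c: "\<forall>C\<in>Cs. (\<Sum>i\<in>C. u i) \<le> c" "0 < c" and T: "0 < T"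
    and j: "0 < j" "j < N"
  shows "measure_pmf.prob P
           {\<omega>. dotp I u (gamma \<epsilon> I P S j \<omega>)
               \<ge> condE P (\<lambda>\<omega>'. take (j - 1) \<omega>') (\<lambda>\<omega>'. dotp I u (gamma \<epsilon> I P S j \<omega>')) \<omega> + T}
         \<le> exp (- 2 * T^2 / (real q * c^2))"
proof -
  obtain j0 where j0: "j = Suc j0"
    using j(1) by (cases j) auto
  define Y where "Y \<omega> = dotp I u (gamma \<epsilon> I P S (Suc j0) \<omega>)" for \<omega>
  define E where "E = {\<omega>. Y \<omega> \<ge> condE P (\<lambda>\<omega>'. take j0 \<omega>') Y \<omega> + T}"
  have "Y (take (Suc j0) \<omega>) = Y \<omega>" "take j0 (take (Suc j0) \<omega>) = take j0 \<omega>" for \<omega>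
    unfolding Y_def dotp_def using gamma_cong_take[of "Suc j0" "take (Suc j0) \<omega>" \<omega>] by simp_all
  then have "take (Suc j0) -` E = E"
    by (auto simp: E_def condE_def)
  then have "measure_pmf.prob P E = measure_pmf.prob (rr_process Cs q X (Suc j0)) E"
    using j unfolding j0 by (intro prob_rr_process_take_invariant) auto
  also have "\<dots> \<le> exp (- 2 * T^2 / (real q * c^2))"
    unfolding rr_process.simps
  proof (rule prob_bind_pmf_le)
    fix h assume h: "h \<in> set_pmf (rr_process Cs q X j0)"
    show "measure_pmf.prob (map_pmf (\<lambda>r. h @ [r]) (replicate_pmf q (sample_pmf Cs (X h)))) E
        \<le> exp (- 2 * T^2 / (real q * c^2))"
      using gamma_dotp_round_tail[OF u c T _ h] j unfolding j0
      by (simp add: E_def Y_def[abs_def] vimage_def)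
  qed
  finally show ?thesis
    unfolding E_def Y_def[abs_def] j0 by simp
qed

end

lemma sum_le_tol: "finite Cs \<Longrightarrow> C \<in> Cs \<Longrightarrow> (\<Sum>i\<in>C. u i) \<le> tol Cs u"
  unfolding tol_def by (intro Max_ge) auto

lemma configs_subset_Pow: "configs I w k \<subseteq> Pow I"
  by (auto simp: configs_def)

lemma iterative_rounding_configs:
  assumes finI: "finite I" and eps: "0 < \<epsilon>" and m: "0 < m" and q: "\<epsilon> * real m \<in> \<nat>"
    and X_approx: "\<forall>j'\<in>{1..nat \<lfloor>1 / \<epsilon>\<rfloor>}.
        \<forall>h\<in>set_pmf (rr_process (configs I w k) (nat \<lfloor>\<epsilon> * real m\<rfloor>) X (j' - 1)).
          approx_LP_sol \<epsilon> I (configs I w k) v (Sset I h (j' - 1))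
             (real m * (1 - (real j' - 1) * \<epsilon>)) (X h)"
  shows "iterative_rounding I (configs I w k) (nat \<lfloor>\<epsilon> * real m\<rfloor>) X (nat \<lfloor>1 / \<epsilon>\<rfloor>) m \<epsilon>"
proof
  fix n h
  assume "n < nat \<lfloor>1 / \<epsilon>\<rfloor>" "h \<in> set_pmf (rr_process (configs I w k) (nat \<lfloor>\<epsilon> * real m\<rfloor>) X n)"
  then have "approx_LP_sol \<epsilon> I (configs I w k) v (Sset I h n) (real m * (1 - real n * \<epsilon>)) (X h)"
    using X_approx[rule_format, of "Suc n" h] by simp
  then show "feasible_frac I (configs I w k) (X h)"
    "fnorm (configs I w k) (X h) = real m * (1 - real n * \<epsilon>)"
    by (simp_all add: approx_LP_sol_def LP_feasible_def)
next
  have "real (nat \<lfloor>1 / \<epsilon>\<rfloor>) \<le> 1 / \<epsilon>"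
    using eps by (simp add: of_nat_nat)
  then show "real (nat \<lfloor>1 / \<epsilon>\<rfloor>) * \<epsilon> \<le> 1"
    unfolding pos_le_divide_eq[OF eps] .
next
  obtain n where "\<epsilon> * real m = real n"
    using q Nats_cases by metis
  then show "real (nat \<lfloor>\<epsilon> * real m\<rfloor>) = \<epsilon> * real m"
    by simp
qed (use finI eps m in \<open>auto simp: configs_subset_Pow\<close>)

theorem lemma4p7:
  fixes I :: "'a set" and w v :: "'a \<Rightarrow> real" and m k :: nat and \<epsilon> :: real
    and X :: "'a history \<Rightarrow> 'a set \<Rightarrow> real"
    and Cstar :: "nat \<Rightarrow> 'a set" and u :: "'a \<Rightarrow> real" and j :: nat and t :: real
  assumes finI: "finite I"
    and w_range: "\<forall>i\<in>I. 0 \<le> w i \<and> w i \<le> 1"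
    and v_nonneg: "\<forall>i\<in>I. 0 \<le> v i"
    and m_pos: "m > 0" and k_pos: "k > 0"
    and eps: "0 < \<epsilon>" "\<epsilon> < 0.1" "sqrt (1 / \<epsilon>) \<in> \<nat>"
    and simple: "real m > exp (exp ((1 / \<epsilon>) ^ 30))" "\<epsilon> * real m \<in> \<nat>"
    and X_approx: "\<forall>j'\<in>{1..nat \<lfloor>1 / \<epsilon>\<rfloor>}.
        \<forall>h\<in>set_pmf (rr_process (configs I w k) (nat \<lfloor>\<epsilon> * real m\<rfloor>) X (j' - 1)).
          approx_LP_sol \<epsilon> I (configs I w k) v (Sset I h (j' - 1))
             (real m * (1 - (real j' - 1) * \<epsilon>)) (X h)"
    and opt_confs: "\<forall>b<m. Cstar b \<in> configs I w k"
    and opt: "\<forall>f. (\<forall>b<m. f b \<in> configs I w k) \<longrightarrow>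
                 setval v (\<Union>b<m. f b) \<le> setval v (\<Union>b<m. Cstar b)"
    and u_nonneg: "\<forall>i\<in>I. 0 \<le> u i"
    and tol_nz: "tol (configs I w k) u \<noteq> 0"
    and j_range: "j \<in> {1..nat \<lfloor>1 / \<epsilon>\<rfloor> - 1}"
    and t_pos: "t > 0"
  shows "measure_pmf.prob
           (rr_process (configs I w k) (nat \<lfloor>\<epsilon> * real m\<rfloor>) X (nat \<lfloor>1 / \<epsilon>\<rfloor>))
           {\<omega>. dotp I u (gamma \<epsilon> I
                   (rr_process (configs I w k) (nat \<lfloor>\<epsilon> * real m\<rfloor>) X (nat \<lfloor>1 / \<epsilon>\<rfloor>))
                   (\<Union>b<m. Cstar b) j \<omega>)
                 \<ge> condE (rr_process (configs I w k) (nat \<lfloor>\<epsilon> * real m\<rfloor>) X (nat \<lfloor>1 / \<epsilon>\<rfloor>))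
                     (\<lambda>\<omega>'. take (j - 1) \<omega>')
                     (\<lambda>\<omega>'. dotp I u (gamma \<epsilon> I
                        (rr_process (configs I w k) (nat \<lfloor>\<epsilon> * real m\<rfloor>) X (nat \<lfloor>1 / \<epsilon>\<rfloor>))
                        (\<Union>b<m. Cstar b) j \<omega>')) \<omega>
                   + t * tol (configs I w k) u}
         \<le> exp (- (t ^ 2) / (2 * \<epsilon> * real m))"
proof -
  interpret iterative_rounding I "configs I w k" "nat \<lfloor>\<epsilon> * real m\<rfloor>" X "nat \<lfloor>1 / \<epsilon>\<rfloor>" m \<epsilon>
    using finI eps(1) m_pos simple(2) X_approx by (rule iterative_rounding_configs)
  have finite_configs: "finite (configs I w k)"
    using finite_subset[OF configs_subset_Pow] finI by auto
  have tol_pos: "0 < tol (configs I w k) u"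
    using sum_le_tol[OF finite_configs, of "{}" u] tol_nz by (simp add: configs_def)
  have tol_ge: "\<forall>C\<in>configs I w k. (\<Sum>i\<in>C. u i) \<le> tol (configs I w k) u"
    using sum_le_tol[OF finite_configs] by blast
  have j: "0 < j" "j < nat \<lfloor>1 / \<epsilon>\<rfloor>"
    using j_range by auto
  have "exp (- 2 * (t * tol (configs I w k) u)^2 / (real (nat \<lfloor>\<epsilon> * real m\<rfloor>) * (tol (configs I w k) u)^2))
      \<le> exp (- (t ^ 2) / (2 * \<epsilon> * real m))"
    using tol_pos eps(1) m_pos by (simp add: q_eq power_mult_distrib field_simps)
  with gamma_dotp_tail[OF u_nonneg tol_ge tol_pos mult_pos_pos[OF t_pos tol_pos] j,
      where S = "\<Union>b<m. Cstar b"]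
  show ?thesis
    by (rule order_trans)
qed

end
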